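(* Let $k\ge2$ and let \[ A_\epsilon+\lambda E_\epsilon=\begin{bmatrix}\lambda E_{1,1} & A_{1,2} & & \\ & \ddots & \ddots & \\ & & \lambda E_{k-1,k-1} & A_{k-1,k}\end{bmatrix} \] be a bidiagonal pencil with $k-1$ block rows of sizes $s_1,\dots,s_{k-1}$ and $k$ block columns of sizes $t_1,\dots,t_k$, where $t_{i+1}=s_i$ for $i=1,\dots,k-1$, all unmarked blocks are zero, and \[ A_{i,i+1}\in\mathbb{C}^{s_i\times s_i},\qquad E_{i,i}=\begin{bmatrix}0&\hat E_{i,i}\end{bmatrix}\in\mathbb{C}^{s_i\times t_i},\qquad \hat E_{i,i}\in\mathbb{C}^{s_i\times s_i}, \] with both $A_{i,i+1}$ and $\hat E_{i,i}$ invertible and upper triangular. Let $n=\sum_{i=1}^k t_i$, let $r$ be the normal rank of the pencil, and put \[ Z_i=\begin{bmatrix}0&-A_{i,i+1}^{-1}\hat E_{i,i}\end{bmatrix}\in\mathbb{C}^{s_i\times t_i},\qquad N(\lambda):=\begin{bmatrix}I_{t_1}\\ Z_1\lambda\\ \vdots\\ Z_{k-1}\cdots Z_1\lambda^{k-1}\end{bmatrix}\in\mathbb{C}[\lambda]^{n\times(n-r)}. \] Then the columns of $N(\lambda)$ form a minimal polynomial basis for the right null space of $A_\epsilon+\lambda E_\epsilon$.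
   Context: The normal rank is the rank over $\mathbb{C}(\lambda)$. The right null space of a pencil $P(\lambda)$ is $\{x\in\mathbb{C}(\lambda)^n: P(\lambda)x(\lambda)=0\}$. A minimal polynomial basis of it is a polynomial matrix whose columns form a basis of this $\mathbb{C}(\lambda)$-space and whose sum of column degrees is minimal among all polynomial bases. *)

theory Defs
  imports "Jordan_Normal_Form.DL_Rank" "HOL-Computational_Algebra.Polynomial"
    "HOL-Computational_Algebra.Fraction_Field"
begin

definition blk_index :: "nat list \<Rightarrow> nat \<Rightarrow> nat" where
  "blk_index sizes a = (LEAST i. a < sum_list (take (Suc i) sizes))"

text \<open>Block matrix with block row sizes rs, block column sizes cs and blocks B i j
  (0-indexed); block B i j is meant to have size (rs!i) x (cs!j).\<close>
definition block_mat :: "nat list \<Rightarrow> nat list \<Rightarrow> (nat \<Rightarrow> nat \<Rightarrow> 'a mat) \<Rightarrow> 'a mat" where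
  "block_mat rs cs B = mat (sum_list rs) (sum_list cs)
     (\<lambda>(a,b). let i = blk_index rs a; j = blk_index cs b
              in B i j $$ (a - sum_list (take i rs), b - sum_list (take j cs)))"

text \<open>[0 B] with total number of columns t (zero columns padded on the left).\<close>
definition pad_left :: "nat \<Rightarrow> 'a::zero mat \<Rightarrow> 'a mat" where
  "pad_left t B = mat (dim_row B) t
     (\<lambda>(a,b). if b < t - dim_col B then 0 else B $$ (a, b - (t - dim_col B)))"

definition mat_inv :: "'a::semiring_1 mat \<Rightarrow> 'a mat" where
  "mat_inv A = (SOME B. inverts_mat A B \<and> inverts_mat B A)"

definition pencil :: "complex mat \<Rightarrow> complex mat \<Rightarrow> complex poly mat" where
  "pencil A E = mat (dim_row A) (dim_col A) (\<lambda>ij. [: A $$ ij, E $$ ij :])"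

definition to_rat_fun_mat :: "complex poly mat \<Rightarrow> complex poly fract mat" where
  "to_rat_fun_mat P = map_mat to_fract P"

definition right_null_space :: "complex poly mat \<Rightarrow> complex poly fract vec set" where
  "right_null_space P = {x \<in> carrier_vec (dim_col P).
      to_rat_fun_mat P *\<^sub>v x = 0\<^sub>v (dim_row P)}"

definition normal_rank :: "complex poly mat \<Rightarrow> nat" where
  "normal_rank P = vec_space.rank (dim_row P) (to_rat_fun_mat P)"

definition poly_basis_of_null_space :: "complex poly mat \<Rightarrow> complex poly mat \<Rightarrow> bool" where
  "poly_basis_of_null_space P N \<longleftrightarrow>
     dim_row N = dim_col P \<and>
     (\<forall>j < dim_col N. col (to_rat_fun_mat N) j \<in> right_null_space P) \<and>
     (\<forall>x \<in> right_null_space P. \<exists>!c. c \<in> carrier_vec (dim_col N) \<and> to_rat_fun_mat N *\<^sub>v c = x)"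

definition col_degree :: "complex poly mat \<Rightarrow> nat \<Rightarrow> nat" where
  "col_degree N j = Max (insert 0 {degree (N $$ (i,j)) | i. i < dim_row N})"

definition sum_col_degrees :: "complex poly mat \<Rightarrow> nat" where
  "sum_col_degrees N = (\<Sum>j<dim_col N. col_degree N j)"

definition minimal_poly_basis :: "complex poly mat \<Rightarrow> complex poly mat \<Rightarrow> bool" where
  "minimal_poly_basis P N \<longleftrightarrow> poly_basis_of_null_space P N \<and>
     (\<forall>M. poly_basis_of_null_space P M \<longrightarrow> sum_col_degrees N \<le> sum_col_degrees M)"

text \<open>Block column sizes t 0, ..., t (k-1) (= t_1..t_k); block row sizes
  s_i = t (i+1), i = 0..k-2. A i = A_{i+1,i+2}, Eh i = hat E_{i+1,i+1}.\<close>
definition A_eps :: "nat \<Rightarrow> (nat \<Rightarrow> nat) \<Rightarrow> (nat \<Rightarrow> complex mat) \<Rightarrow> complex mat" where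
  "A_eps k t A = block_mat (map t [1..<k]) (map t [0..<k])
     (\<lambda>i j. if j = Suc i then A i else 0\<^sub>m (t (Suc i)) (t j))"

definition E_eps :: "nat \<Rightarrow> (nat \<Rightarrow> nat) \<Rightarrow> (nat \<Rightarrow> complex mat) \<Rightarrow> complex mat" where
  "E_eps k t Eh = block_mat (map t [1..<k]) (map t [0..<k])
     (\<lambda>i j. if j = i then pad_left (t i) (Eh i) else 0\<^sub>m (t (Suc i)) (t j))"

definition Zmat :: "(nat \<Rightarrow> nat) \<Rightarrow> (nat \<Rightarrow> complex mat) \<Rightarrow> (nat \<Rightarrow> complex mat) \<Rightarrow> nat \<Rightarrow> complex mat" where
  "Zmat t A Eh i = pad_left (t i) (- (mat_inv (A i) * Eh i))"

text \<open>Zprod j = Z_j ... Z_1 (with Zprod 0 = identity of size t_1).\<close>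
fun Zprod :: "(nat \<Rightarrow> nat) \<Rightarrow> (nat \<Rightarrow> complex mat) \<Rightarrow> (nat \<Rightarrow> complex mat) \<Rightarrow> nat \<Rightarrow> complex mat" where
  "Zprod t A Eh 0 = 1\<^sub>m (t 0)"
| "Zprod t A Eh (Suc j) = Zmat t A Eh j * Zprod t A Eh j"

definition N_mat :: "nat \<Rightarrow> (nat \<Rightarrow> nat) \<Rightarrow> (nat \<Rightarrow> complex mat) \<Rightarrow> (nat \<Rightarrow> complex mat) \<Rightarrow> complex poly mat" where
  "N_mat k t A Eh = block_mat (map t [0..<k]) [t 0]
     (\<lambda>j _. map_mat (\<lambda>c. monom c j) (Zprod t A Eh j))"

end

theory Submission
  imports Defs "Jordan_Normal_Form.DL_Rank_Submatrix"
begin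

text \<open>
  Split a vector of C(\<lambda>)^n into blocks x_1, ..., x_k. Block row i of the pencil reads
  \<lambda> E_{i,i} x_i + A_{i,i+1} x_{i+1} = 0, i.e. x_{i+1} = \<lambda> Z_i x_i, because A_{i,i+1} is
  invertible. Hence a null vector is determined by its first block and equals N(\<lambda>) x_1, so
  the columns of N form a basis of the null space; and a null vector with x_1 = 0 vanishes, so
  the trailing square minor of the pencil is nonsingular and the normal rank is n - t_1.

  Every other polynomial basis factors as M = N C, where C is the first block row of M, a
  polynomial matrix invertible over C(\<lambda>). Since Z_j ... Z_1 = [0 U_j] with U_j upper
  triangular and nonsingular, column l of N (counted from 0) has degree at most d(l), the
  last j with t_1 \<le> l + t_{j+1}, and N has the predictable-degree property: N c has an entry of degree
  at least d(l) whenever c_l \<noteq> 0. A permutation p with C_{i,p(i)} \<noteq> 0 then gives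
  deg col_{p(i)} M \<ge> d(i) \<ge> deg col_i N.
\<close>

lemma sum_eq_single:
  assumes "finite S" "j \<in> S" "\<And>l. l \<in> S \<Longrightarrow> l \<noteq> j \<Longrightarrow> f l = 0"
  shows "sum f S = f j"
  using sum.mono_neutral_right[of S "{j}" f] assms by auto

lemma sum_lessThan_add: "(\<Sum>b<m + n :: nat. g b) = (\<Sum>b<m. g b) + (\<Sum>j<n. g (m + j))"
  by (induction n) (simp_all add: add.assoc)

lemma finite_obtain_max_greatest:
  fixes g :: "nat \<Rightarrow> nat"
  assumes "finite L" "L \<noteq> {}"
  obtains m where "m \<in> L" "\<And>l. l \<in> L \<Longrightarrow> g l \<le> g m" "\<And>l. l \<in> L \<Longrightarrow> g l = g m \<Longrightarrow> l \<le> m"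
proof -
  define D where "D = Max (g ` L)"
  let ?L = "{l \<in> L. g l = D}"
  have "D \<in> g ` L" unfolding D_def using assms by simp
  then have "?L \<noteq> {}" by auto
  then have "Max ?L \<in> ?L" using assms(1) by (intro Max_in) auto
  moreover have "g l \<le> D" if "l \<in> L" for l unfolding D_def using assms(1) that by simp
  moreover have "l \<le> Max ?L" if "l \<in> ?L" for l using assms(1) that by simp
  ultimately show thesis by (intro that[of "Max ?L"]) auto
qed

lemma mult_mat_vec_zero: "A \<in> carrier_mat n m \<Longrightarrow> A *\<^sub>v 0\<^sub>v m = (0\<^sub>v n :: 'a::semiring_0 vec)"
  by (intro eq_vecI) (auto simp: scalar_prod_def)

lemma smult_mat_mult_vec:
  "v \<in> carrier_vec (dim_col M) \<Longrightarrow>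
   (a \<cdot>\<^sub>m M) *\<^sub>v v = a \<cdot>\<^sub>v (M *\<^sub>v (v :: 'a::comm_semiring_0 vec))"
  by (auto simp: scalar_prod_def sum_distrib_left mult.assoc intro!: eq_vecI sum.cong)

lemma (in semiring_hom) mat_hom_mult_vec_assoc:
  assumes "X \<in> carrier_mat a b" "Y \<in> carrier_mat b d" "v \<in> carrier_vec d"
  shows "mat\<^sub>h X *\<^sub>v (mat\<^sub>h Y *\<^sub>v v) = mat\<^sub>h (X * Y) *\<^sub>v v"
  using assms by (simp add: mat_hom_mult)

lemma (in vec_space) rank_le_dim_row:
  assumes "A \<in> carrier_mat n nc"
  shows "rank A \<le> n"
proof -
  have "set (cols A) \<subseteq> carrier_vec n" using assms cols_dim by blast
  then have "VectorSpace.subspace class_ring (span (set (cols A))) V" by (rule span_is_subspace)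
  from subspace_dim[OF this fin_dim fin_dim_span_cols[OF assms]] show ?thesis
    unfolding rank_def dim_is_n by simp
qed

lemma dim_col_le_dim_row_if_inj:
  fixes B :: "'a::field mat"
  assumes B: "B \<in> carrier_mat n c"
    and inj: "\<And>a. a \<in> carrier_vec c \<Longrightarrow> B *\<^sub>v a = 0\<^sub>v n \<Longrightarrow> a = 0\<^sub>v c"
  shows "c \<le> n"
proof -
  interpret vec_space "TYPE('a)" n .
  have distinct: "distinct (cols B)"
  proof (rule ccontr)
    assume "\<not> distinct (cols B)"
    then obtain i j where ij: "i \<noteq> j" "i < c" "j < c" "col B i = col B j"
      using distinct_conv_nth B by (metis cols_length cols_nth carrier_matD(2))
    let ?a = "unit_vec c i - unit_vec c j :: 'a vec"
    have "\<And>l. l < c \<Longrightarrow> B *\<^sub>v unit_vec c l = col B l"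
      using B by (auto intro!: eq_vecI)
    then have "B *\<^sub>v ?a = 0\<^sub>v n"
      using B ij by (simp add: mult_minus_distrib_mat_vec[OF B])
    then have "?a = 0\<^sub>v c" using inj by simp
    then have "?a $ i = 0" using ij by simp
    then show False using ij by simp
  qed
  have "\<not> lin_dep (set (cols B))"
  proof
    assume "lin_dep (set (cols B))"
    then obtain v where "v \<in> carrier_vec c" "v \<noteq> 0\<^sub>v c" "B *\<^sub>v v = 0\<^sub>v n"
      using lin_depE[OF B _ distinct] by blast
    then show False using inj by blast
  qed
  then have "rank B = c" using lin_indpt_full_rank[OF B distinct] by blast
  then show ?thesis using rank_le_dim_row[OF B] by simp
qed

lemma dim_row_le_dim_col_if_surj:
  fixes C :: "'a::field mat"
  assumes C: "C \<in> carrier_mat n m"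
    and surj: "\<And>l. l < n \<Longrightarrow> \<exists>a \<in> carrier_vec m. C *\<^sub>v a = unit_vec n l"
  shows "n \<le> m"
proof -
  obtain f where f: "\<And>l. l < n \<Longrightarrow> f l \<in> carrier_vec m \<and> C *\<^sub>v f l = unit_vec n l"
    using surj by metis
  define B where "B = mat m n (\<lambda>(i, l). f l $ i)"
  have B: "B \<in> carrier_mat m n" unfolding B_def by simp
  have CB: "C * B = 1\<^sub>m n"
  proof (rule eq_matI)
    fix i l assume "i < dim_row (1\<^sub>m n :: 'a mat)" "l < dim_col (1\<^sub>m n :: 'a mat)"
    then have i: "i < n" and l: "l < n" by auto
    have "col B l = f l" using f[OF l] l unfolding B_def by (intro eq_vecI) auto
    then have "(C * B) $$ (i, l) = (C *\<^sub>v f l) $ i" using i l C B by simp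
    then show "(C * B) $$ (i, l) = 1\<^sub>m n $$ (i, l)" using f[OF l] i l by simp
  qed (use C B in auto)
  show ?thesis
  proof (rule dim_col_le_dim_row_if_inj[OF B])
    fix w assume w: "w \<in> carrier_vec n" and "B *\<^sub>v w = 0\<^sub>v m"
    then have "(C * B) *\<^sub>v w = 0\<^sub>v n" using C B w by auto
    then show "w = 0\<^sub>v n" using w unfolding CB by simp
  qed
qed

lemma rank_eq_dim_row_if_trailing_cols_inj:
  fixes A :: "'a::field mat"
  assumes A: "A \<in> carrier_mat n (m + n)"
    and inj: "\<And>v. v \<in> carrier_vec n \<Longrightarrow> A *\<^sub>v (0\<^sub>v m @\<^sub>v v) = 0\<^sub>v n \<Longrightarrow> v = 0\<^sub>v n"
  shows "vec_space.rank n A = n"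
proof -
  let ?S = "submatrix A UNIV {m..}"
  have "{j. j < m + n \<and> j \<in> {m..}} = {m..<m + n}" by auto
  then have cols: "card {j. j < m + n \<and> j \<in> {m..}} = n" by simp
  have S: "?S \<in> carrier_mat n n"
  proof -
    have "card {i. i < n \<and> i \<in> (UNIV :: nat set)} = n" by simp
    then show ?thesis
      using A by (intro carrier_matI) (simp_all only: dim_submatrix cols carrier_matD[OF A])
  qed
  have pick: "pick {m..} j = m + j" for j
  proof -
    have "{a \<in> {m..}. a < m + j} = {m..<m + j}" by auto
    then have "card {a \<in> {m..}. a < m + j} = j" by simp
    then show ?thesis using pick_card_in_set[of "m + j" "{m..}"] by simp
  qed
  have S_index: "?S $$ (i, j) = A $$ (i, m + j)" if "i < n" "j < n" for i j
    using submatrix_index[of i A UNIV j "{m..}"] that A cols by (simp add: pick pick_UNIV)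
  have S_mult: "?S *\<^sub>v v = A *\<^sub>v (0\<^sub>v m @\<^sub>v v)" if v: "v \<in> carrier_vec n" for v
  proof (rule eq_vecI)
    fix i assume "i < dim_vec (A *\<^sub>v (0\<^sub>v m @\<^sub>v v))"
    then have i: "i < n" using A by simp
    have "(A *\<^sub>v (0\<^sub>v m @\<^sub>v v)) $ i = (\<Sum>b<m + n. A $$ (i, b) * (0\<^sub>v m @\<^sub>v v) $ b)"
      using A v i by (simp add: scalar_prod_def atLeast0LessThan)
    also have "\<dots> = (\<Sum>j<n. A $$ (i, m + j) * v $ j)"
      using v by (simp add: sum_lessThan_add)
    also have "\<dots> = (?S *\<^sub>v v) $ i"
      using S v i S_index by (simp add: scalar_prod_def atLeast0LessThan)
    finally show "(?S *\<^sub>v v) $ i = (A *\<^sub>v (0\<^sub>v m @\<^sub>v v)) $ i" ..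
  qed (use A S in simp)
  have "det ?S \<noteq> 0"
  proof
    assume "det ?S = 0"
    then obtain v where "v \<in> carrier_vec n" "v \<noteq> 0\<^sub>v n" "?S *\<^sub>v v = 0\<^sub>v n"
      using det_0_iff_vec_prod_zero_field[OF S] by blast
    then show False using inj S_mult by metis
  qed
  from vec_space.rank_gt_minor[OF A this] have "n \<le> vec_space.rank n A" unfolding cols .
  then show ?thesis using vec_space.rank_le_dim_row[OF A] by simp
qed

lemma det_nonzero_obtain_perm:
  assumes "A \<in> carrier_mat n n" "det A \<noteq> 0"
  obtains p where "p permutes {0..<n}" "\<And>i. i < n \<Longrightarrow> A $$ (i, p i) \<noteq> 0"
proof -
  have "(\<Sum>p | p permutes {0..<n}. signof p * (\<Prod>i = 0..<n. A $$ (i, p i))) \<noteq> 0"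
    using assms by (simp add: det_def')
  then obtain p where "p permutes {0..<n}" "(\<Prod>i = 0..<n. A $$ (i, p i)) \<noteq> 0"
    by (metis (mono_tags, lifting) mult_not_zero sum.not_neutral_contains_not_neutral mem_Collect_eq)
  then show thesis
    using prod_zero[of "{0..<n}" "\<lambda>i. A $$ (i, p i)"]
    by (metis that atLeastLessThan_iff finite_atLeastLessThan le0)
qed

lemma mat_inv_correct:
  assumes A: "A \<in> carrier_mat n n" and inv: "invertible_mat A"
  shows "mat_inv A \<in> carrier_mat n n" "A * mat_inv A = 1\<^sub>m n" "mat_inv A * A = 1\<^sub>m n"
proof -
  from inv obtain B where "inverts_mat A B \<and> inverts_mat B A" unfolding invertible_mat_def by blast
  then have "inverts_mat A (mat_inv A) \<and> inverts_mat (mat_inv A) A"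
    unfolding mat_inv_def by (rule someI)
  then have AB: "A * mat_inv A = 1\<^sub>m n" and BA: "mat_inv A * A = 1\<^sub>m (dim_row (mat_inv A))"
    using A unfolding inverts_mat_def by auto
  have "dim_col (mat_inv A) = n" using arg_cong[OF AB, of dim_col] by simp
  moreover have "dim_row (mat_inv A) = n" using arg_cong[OF BA, of dim_col] A by simp
  ultimately show "mat_inv A \<in> carrier_mat n n" "A * mat_inv A = 1\<^sub>m n" "mat_inv A * A = 1\<^sub>m n"
    using AB BA by auto
qed

lemma invertible_mat_det_nonzero:
  fixes A :: "'a::field mat"
  assumes "A \<in> carrier_mat n n" "invertible_mat A"
  shows "det A \<noteq> 0" "det (mat_inv A) \<noteq> 0"
  using det_mult[OF assms(1) mat_inv_correct(1)[OF assms]] mat_inv_correct(2)[OF assms] by auto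

lemma upper_triangular_mult:
  fixes A B :: "'a::semiring_0 mat"
  assumes A: "A \<in> carrier_mat n n" and B: "B \<in> carrier_mat n n"
    and "upper_triangular A" "upper_triangular B"
  shows "upper_triangular (A * B)"
proof (rule upper_triangularI)
  fix i j assume ji: "j < i" and "i < dim_row (A * B)"
  then have i: "i < n" using A by simp
  have "(A * B) $$ (i, j) = (\<Sum>l = 0..<n. A $$ (i, l) * B $$ (l, j))"
    using A B i ji by (simp add: scalar_prod_def)
  also have "\<dots> = 0"
  proof (rule sum.neutral, intro ballI)
    fix l assume "l \<in> {0..<n}"
    then show "A $$ (i, l) * B $$ (l, j) = 0"
      using assms ji i upper_triangularD[of A l i] upper_triangularD[of B j l]
      by (cases "l < i") auto
  qed
  finally show "(A * B) $$ (i, j) = 0" .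
qed

lemma upper_triangular_diag_nonzero:
  fixes A :: "'a::idom mat"
  assumes "A \<in> carrier_mat n n" "upper_triangular A" "det A \<noteq> 0" "i < n"
  shows "A $$ (i, i) \<noteq> 0"
  using assms upper_triangular_imp_det_eq_0_iff[of A n] unfolding diag_mat_def by auto

lemma upper_triangular_left_inverse:
  fixes A B :: "'a::field mat"
  assumes A: "A \<in> carrier_mat n n" and B: "B \<in> carrier_mat n n" and BA: "B * A = 1\<^sub>m n"
    and uA: "upper_triangular A"
  shows "upper_triangular B"
proof -
  have "det B * det A = 1" using det_mult[OF B A] BA by simp
  then have "det A \<noteq> 0" by auto
  then have diag: "A $$ (j, j) \<noteq> 0" if "j < n" for j
    using upper_triangular_diag_nonzero[OF A uA _ that] by blast
  have "\<forall>i. j < i \<longrightarrow> i < n \<longrightarrow> B $$ (i, j) = 0" for j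
  proof (induction j rule: less_induct)
    case (less j)
    show ?case
    proof (intro allI impI)
      fix i assume ji: "j < i" and i: "i < n"
      have "0 = (B * A) $$ (i, j)" using BA ji i by simp
      also have "\<dots> = (\<Sum>l = 0..<n. B $$ (i, l) * A $$ (l, j))"
        using A B ji i by (simp add: scalar_prod_def)
      also have "\<dots> = B $$ (i, j) * A $$ (j, j)"
      proof (rule sum_eq_single)
        fix l assume l: "l \<in> {0..<n}" "l \<noteq> j"
        then show "B $$ (i, l) * A $$ (l, j) = 0"
          using less ji i upper_triangularD[OF uA, of j l] A by (cases "l < j") auto
      qed (use ji i in auto)
      finally show "B $$ (i, j) = 0" using diag[of j] ji i by simp
    qed
  qed
  then show ?thesis using B by (intro upper_triangularI) auto
qed

lemma index_pad_left:
  "a < dim_row X \<Longrightarrow> b < n \<Longrightarrow>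
   pad_left n X $$ (a, b) = (if b < n - dim_col X then 0 else X $$ (a, b - (n - dim_col X)))"
  "dim_row (pad_left n X) = dim_row X" "dim_col (pad_left n X) = n"
  unfolding pad_left_def by auto

lemma pad_left_carrier: "X \<in> carrier_mat m r \<Longrightarrow> pad_left n X \<in> carrier_mat m n"
  unfolding pad_left_def by auto

lemma mult_pad_left:
  assumes A: "A \<in> carrier_mat m r" and X: "X \<in> carrier_mat r s" and "s \<le> n"
  shows "A * pad_left n X = pad_left n (A * X)"
proof (rule eq_matI)
  fix i j assume "i < dim_row (pad_left n (A * X))" "j < dim_col (pad_left n (A * X))"
  then have i: "i < m" and j: "j < n" using A by (auto simp: index_pad_left)
  show "(A * pad_left n X) $$ (i, j) = pad_left n (A * X) $$ (i, j)"
    using A X i j by (auto simp: index_pad_left scalar_prod_def intro!: sum.cong)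
qed (use A X in \<open>auto simp: index_pad_left\<close>)

lemma pad_left_uminus: "pad_left n (- X) = - pad_left n (X :: 'a::group_add mat)"
  by (auto simp: index_pad_left intro!: eq_matI)

(* X = [0 U] with U square, upper triangular and with nonzero diagonal *)
definition padded_triangular :: "'a::zero mat \<Rightarrow> bool" where
  "padded_triangular X \<longleftrightarrow> dim_row X \<le> dim_col X \<and>
     (\<forall>q < dim_row X. \<forall>l < dim_col X. l + dim_row X < dim_col X + q \<longrightarrow> X $$ (q, l) = 0) \<and>
     (\<forall>q < dim_row X. X $$ (q, dim_col X - dim_row X + q) \<noteq> 0)"

lemma padded_triangular_one: "padded_triangular (1\<^sub>m n :: 'a::zero_neq_one mat)"
  unfolding padded_triangular_def by simp

lemma padded_triangular_pad_left:
  assumes U: "U \<in> carrier_mat m m" and "m \<le> n" and "upper_triangular U"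
    and diag: "\<And>q. q < m \<Longrightarrow> U $$ (q, q) \<noteq> 0"
  shows "padded_triangular (pad_left n U)"
  using assms upper_triangularD[of U] unfolding padded_triangular_def
  by (auto simp: index_pad_left)

lemma padded_triangular_mult:
  fixes X Y :: "'a::idom mat"
  assumes X: "X \<in> carrier_mat a b" and Y: "Y \<in> carrier_mat b c"
    and pX: "padded_triangular X" and pY: "padded_triangular Y"
  shows "padded_triangular (X * Y)"
proof -
  have ab: "a \<le> b" and bc: "b \<le> c" using X Y pX pY unfolding padded_triangular_def by auto
  have X0: "X $$ (q, s) = 0" if "q < a" "s < b" "s + a < b + q" for q s
    using pX X that unfolding padded_triangular_def by auto
  have Y0: "Y $$ (s, l) = 0" if "s < b" "l < c" "l + b < c + s" for s l
    using pY Y that unfolding padded_triangular_def by auto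
  have entry: "(X * Y) $$ (q, l) = (\<Sum>s = 0..<b. X $$ (q, s) * Y $$ (s, l))"
    if "q < a" "l < c" for q l
    using X Y that by (simp add: scalar_prod_def)
  have zero: "(X * Y) $$ (q, l) = 0" if q: "q < a" and l: "l < c" and ql: "l + a < c + q" for q l
  proof -
    have "X $$ (q, s) * Y $$ (s, l) = 0" if s: "s < b" for s
    proof (cases "s + a < b + q")
      case True
      then show ?thesis using X0[OF q s] by simp
    next
      case False
      then have "l + b < c + s" using ql by linarith
      then show ?thesis using Y0[OF s l] by simp
    qed
    then show ?thesis unfolding entry[OF q l] by (intro sum.neutral) simp
  qed
  have diag: "(X * Y) $$ (q, c - a + q) \<noteq> 0" if q: "q < a" for q
  proof -
    let ?s = "b - a + q"
    have s: "?s < b" and l: "c - a + q < c" and sl: "c - b + ?s = c - a + q"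
      using q ab bc by auto
    have "(X * Y) $$ (q, c - a + q) = X $$ (q, ?s) * Y $$ (?s, c - a + q)"
      unfolding entry[OF q l]
    proof (rule sum_eq_single)
      fix s assume "s \<in> {0..<b}" "s \<noteq> ?s"
      then show "X $$ (q, s) * Y $$ (s, c - a + q) = 0"
        using X0[OF q, of s] Y0[of s "c - a + q"] ab bc q by (cases "s < ?s") simp_all
    qed (use s in auto)
    moreover have "X $$ (q, ?s) \<noteq> 0"
      using pX X q unfolding padded_triangular_def by blast
    moreover have "Y $$ (?s, c - b + ?s) \<noteq> 0"
      using pY Y s unfolding padded_triangular_def by blast
    ultimately show ?thesis unfolding sl by simp
  qed
  show ?thesis using X Y ab bc zero diag unfolding padded_triangular_def by auto
qed

lemma sum_list_take_mono:
  fixes xs :: "nat list"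
  assumes "m \<le> n" shows "sum_list (take m xs) \<le> sum_list (take n xs)"
proof -
  have "take n xs = take m xs @ take (n - m) (drop m xs)"
    using assms by (metis le_add_diff_inverse take_add)
  then show ?thesis by (metis le_add1 sum_list_append)
qed

lemma blk_index_eq:
  assumes "sum_list (take i xs) \<le> a" "a < sum_list (take (Suc i) xs)"
  shows "blk_index xs a = i"
  unfolding blk_index_def
proof (rule Least_equality)
  show "a < sum_list (take (Suc i) xs)" by fact
  fix y assume y: "a < sum_list (take (Suc y) xs)"
  show "i \<le> y"
  proof (rule ccontr)
    assume "\<not> i \<le> y"
    then have "sum_list (take (Suc y) xs) \<le> sum_list (take i xs)"
      by (intro sum_list_take_mono) simp
    then show False using y assms by simp
  qed
qed

lemma sum_list_map_upt: "sum_list (map f [0..<m]) = (\<Sum>i<m. f i)"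
  by (simp add: interv_sum_list_conv_sum_set_nat atLeast0LessThan)

lemma sum_list_take_map_upt: "j \<le> m \<Longrightarrow> sum_list (take j (map f [0..<m])) = (\<Sum>i<j. f i)"
  by (simp add: take_map min_def sum_list_map_upt)

lemma block_mat_upt_carrier:
  "block_mat (map f [0..<m]) (map g [0..<n]) B \<in> carrier_mat (\<Sum>i<m. f i) (\<Sum>j<n. g j)"
  unfolding block_mat_def by (simp add: sum_list_map_upt)

lemma block_pos_less_sum:
  fixes f :: "nat \<Rightarrow> nat"
  assumes "i < m" "r < f i"
  shows "(\<Sum>i'<i. f i') + r < (\<Sum>i<m. f i)"
proof -
  have "(\<Sum>i'<i. f i') + r < (\<Sum>i'<Suc i. f i')" using assms by simp
  also have "\<dots> \<le> (\<Sum>i<m. f i)" using assms by (intro sum_mono2) auto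
  finally show ?thesis .
qed

lemma less_sum_obtain_block:
  fixes f :: "nat \<Rightarrow> nat"
  assumes "a < (\<Sum>i<m. f i)"
  obtains i r where "i < m" "r < f i" "a = (\<Sum>i'<i. f i') + r"
  using assms
proof (induction m)
  case (Suc m)
  show ?case
  proof (cases "a < (\<Sum>i<m. f i)")
    case True
    then show ?thesis using Suc.IH Suc.prems(1) less_SucI by blast
  next
    case False
    then show ?thesis using Suc.prems by (intro Suc.prems(1)[of m "a - (\<Sum>i<m. f i)"]) auto
  qed
qed simp

lemma index_block_mat_upt:
  assumes i: "i < m" and j: "j < n" and r: "r < f i" and q: "q < g j"
  shows "block_mat (map f [0..<m]) (map g [0..<n]) B $$ ((\<Sum>i'<i. f i') + r, (\<Sum>j'<j. g j') + q)
    = B i j $$ (r, q)"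
proof -
  have "blk_index (map f [0..<m]) ((\<Sum>i'<i. f i') + r) = i"
    using i r by (intro blk_index_eq) (simp_all add: sum_list_take_map_upt)
  moreover have "blk_index (map g [0..<n]) ((\<Sum>j'<j. g j') + q) = j"
    using j q by (intro blk_index_eq) (simp_all add: sum_list_take_map_upt)
  ultimately show ?thesis
    using block_pos_less_sum[of i m r f] block_pos_less_sum[of j n q g] i j r q
    unfolding block_mat_def by (simp add: sum_list_map_upt sum_list_take_map_upt Let_def)
qed

lemma sum_lessThan_sum_blocks:
  fixes f :: "nat \<Rightarrow> nat" and g :: "nat \<Rightarrow> 'a::comm_monoid_add"
  shows "(\<Sum>b<(\<Sum>i<m. f i). g b) = (\<Sum>i<m. \<Sum>q<f i. g ((\<Sum>i'<i. f i') + q))"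
  by (induction m) (simp_all add: sum_lessThan_add)

definition vec_block :: "(nat \<Rightarrow> nat) \<Rightarrow> 'a vec \<Rightarrow> nat \<Rightarrow> 'a vec" where
  "vec_block f x j = vec (f j) (\<lambda>q. x $ ((\<Sum>i<j. f i) + q))"

lemma vec_block_carrier [simp]: "vec_block f x j \<in> carrier_vec (f j)"
  and dim_vec_block [simp]: "dim_vec (vec_block f x j) = f j"
  and index_vec_block [simp]: "q < f j \<Longrightarrow> vec_block f x j $ q = x $ ((\<Sum>i<j. f i) + q)"
  unfolding vec_block_def by simp_all

lemma vec_eq_iff_blocks:
  assumes x: "x \<in> carrier_vec (\<Sum>i<m. f i)" and y: "y \<in> carrier_vec (\<Sum>i<m. f i)"
  shows "x = y \<longleftrightarrow> (\<forall>j<m. vec_block f x j = vec_block f y j)"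
proof (intro iffI allI impI)
  assume blocks: "\<forall>j<m. vec_block f x j = vec_block f y j"
  show "x = y"
  proof (rule eq_vecI)
    fix a assume "a < dim_vec y"
    then have "a < (\<Sum>i<m. f i)" using y by simp
    then obtain j r where "j < m" "r < f j" "a = (\<Sum>i<j. f i) + r"
      by (rule less_sum_obtain_block)
    then show "x $ a = y $ a"
      using blocks index_vec_block[of r f j x] index_vec_block[of r f j y] by metis
  qed (use x y in simp)
qed simp

lemma vec_block_add:
  "x \<in> carrier_vec (\<Sum>i<m. f i) \<Longrightarrow> y \<in> carrier_vec (\<Sum>i<m. f i) \<Longrightarrow> j < m \<Longrightarrow>
   vec_block f (x + y) j = vec_block f x j + vec_block f y j"
  using block_pos_less_sum[of j m _ f] by (auto intro!: eq_vecI)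

lemma vec_block_minus:
  "x \<in> carrier_vec (\<Sum>i<m. f i) \<Longrightarrow> y \<in> carrier_vec (\<Sum>i<m. f i) \<Longrightarrow> j < m \<Longrightarrow>
   vec_block f (x - y) j = vec_block f x j - vec_block f y j"
  using block_pos_less_sum[of j m _ f] by (auto intro!: eq_vecI)

lemma vec_block_smult:
  "x \<in> carrier_vec (\<Sum>i<m. f i) \<Longrightarrow> j < m \<Longrightarrow> vec_block f (a \<cdot>\<^sub>v x) j = a \<cdot>\<^sub>v vec_block f x j"
  using block_pos_less_sum[of j m _ f] by (auto intro!: eq_vecI)

lemma vec_block_zero: "j < m \<Longrightarrow> vec_block f (0\<^sub>v (\<Sum>i<m. f i)) j = 0\<^sub>v (f j)"
  using block_pos_less_sum[of j m _ f] by (auto intro!: eq_vecI)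

lemma vec_block_mult_block_mat:
  fixes h :: "'a::zero \<Rightarrow> 'b::comm_semiring_0"
  assumes h0: "h 0 = 0" and i: "i < m" and j': "j' < n"
    and B: "B i j' \<in> carrier_mat (f i) (g j')"
    and zero: "\<And>j. j < n \<Longrightarrow> j \<noteq> j' \<Longrightarrow> B i j = 0\<^sub>m (f i) (g j)"
    and x: "x \<in> carrier_vec (\<Sum>j<n. g j)"
  shows "vec_block f (map_mat h (block_mat (map f [0..<m]) (map g [0..<n]) B) *\<^sub>v x) i
    = map_mat h (B i j') *\<^sub>v vec_block g x j'"
proof (rule eq_vecI)
  let ?M = "block_mat (map f [0..<m]) (map g [0..<n]) B"
  have M: "?M \<in> carrier_mat (\<Sum>i<m. f i) (\<Sum>j<n. g j)" by (rule block_mat_upt_carrier)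
  fix r assume "r < dim_vec (map_mat h (B i j') *\<^sub>v vec_block g x j')"
  then have r: "r < f i" using B by simp
  have a: "(\<Sum>i'<i. f i') + r < (\<Sum>i<m. f i)" using block_pos_less_sum[where f=f, OF i r] .
  have "(map_mat h ?M *\<^sub>v x) $ ((\<Sum>i'<i. f i') + r)
      = (\<Sum>b<(\<Sum>j<n. g j). h (?M $$ ((\<Sum>i'<i. f i') + r, b)) * x $ b)"
    using a M x by (simp add: scalar_prod_def atLeast0LessThan)
  also have "\<dots> = (\<Sum>j<n. \<Sum>q<g j. h (B i j $$ (r, q)) * x $ ((\<Sum>j'<j. g j') + q))"
    unfolding sum_lessThan_sum_blocks using i r by (simp add: index_block_mat_upt)
  also have "\<dots> = (\<Sum>q<g j'. h (B i j' $$ (r, q)) * x $ ((\<Sum>j'<j'. g j') + q))"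
    using j' zero r h0 by (intro sum_eq_single) auto
  also have "\<dots> = (map_mat h (B i j') *\<^sub>v vec_block g x j') $ r"
    using B r by (simp add: scalar_prod_def atLeast0LessThan)
  finally show "vec_block f (map_mat h ?M *\<^sub>v x) i $ r = (map_mat h (B i j') *\<^sub>v vec_block g x j') $ r"
    using r by simp
qed (use B in simp)

definition fract_const :: "'a::idom \<Rightarrow> 'a poly fract" where
  "fract_const c = to_fract [:c:]"

definition lam :: "'a::idom poly fract" where
  "lam = to_fract [:0, 1:]"

global_interpretation to_fract: inj_comm_ring_hom "to_fract :: 'a::idom poly \<Rightarrow> 'a poly fract"
  by unfold_locales auto

global_interpretation fract_const: inj_comm_ring_hom "fract_const :: 'a::idom \<Rightarrow> 'a poly fract"
  by unfold_locales (auto simp: fract_const_def simp flip: to_fract_add to_fract_mult)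

lemma to_fract_linear_poly: "to_fract [:a, e:] = fract_const a + lam * fract_const e"
proof -
  have "[:a, e:] = [:a:] + [:0, 1:] * [:e:]" by simp
  then show ?thesis unfolding fract_const_def lam_def by (metis to_fract_add to_fract_mult)
qed

lemma to_fract_monom: "to_fract (monom c j) = fract_const c * lam ^ j"
proof -
  have "monom c j = [:c:] * [:0, 1:] ^ j" by (simp add: monom_altdef)
  then show ?thesis unfolding fract_const_def lam_def by (metis to_fract_mult to_fract.hom_power)
qed

lemma to_rat_fun_mat_pencil:
  assumes "E \<in> carrier_mat (dim_row A) (dim_col A)"
  shows "to_rat_fun_mat (pencil A E) = fract_const.mat_hom A + lam \<cdot>\<^sub>m fract_const.mat_hom E"
  using assms unfolding to_rat_fun_mat_def pencil_def
  by (auto simp: to_fract_linear_poly intro!: eq_matI)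

lemma to_fract_mat_monom:
  "map_mat to_fract (map_mat (\<lambda>c. monom c j) Z) = lam ^ j \<cdot>\<^sub>m fract_const.mat_hom Z"
  by (auto simp: to_fract_monom mult.commute intro!: eq_matI)

lemma col_degree_ge: "a < dim_row M \<Longrightarrow> degree (M $$ (a, j)) \<le> col_degree M j"
  unfolding col_degree_def by (intro Max_ge) auto

section \<open>The null space of the bidiagonal pencil\<close>

locale bidiagonal_pencil =
  fixes k :: nat and t :: "nat \<Rightarrow> nat" and A Eh :: "nat \<Rightarrow> complex mat"
  assumes k_ge_2: "k \<ge> 2"
    and t_decr: "\<forall>i < k - 1. t (Suc i) \<le> t i"
    and A_props: "\<forall>i < k - 1. A i \<in> carrier_mat (t (Suc i)) (t (Suc i))
                       \<and> invertible_mat (A i) \<and> upper_triangular (A i)"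
    and Eh_props: "\<forall>i < k - 1. Eh i \<in> carrier_mat (t (Suc i)) (t (Suc i))
                       \<and> invertible_mat (Eh i) \<and> upper_triangular (Eh i)"
begin

abbreviation "n_rows \<equiv> \<Sum>i<k - 1. t (Suc i)"
abbreviation "n_cols \<equiv> \<Sum>i<k. t i"
abbreviation "P \<equiv> pencil (A_eps k t A) (E_eps k t Eh)"
abbreviation "N \<equiv> N_mat k t A Eh"
abbreviation "PF \<equiv> to_rat_fun_mat P"
abbreviation "NF \<equiv> to_rat_fun_mat N"
abbreviation "Z \<equiv> Zmat t A Eh"
abbreviation "Zp \<equiv> Zprod t A Eh"

(* E_diag i is the block E_{i+1,i+1} of the pencil *)
definition E_diag :: "nat \<Rightarrow> complex mat" where
  "E_diag i = pad_left (t i) (Eh i)"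

lemma A_carrier: "i < k - 1 \<Longrightarrow> A i \<in> carrier_mat (t (Suc i)) (t (Suc i))"
  and A_inv: "i < k - 1 \<Longrightarrow> mat_inv (A i) \<in> carrier_mat (t (Suc i)) (t (Suc i))"
    "i < k - 1 \<Longrightarrow> A i * mat_inv (A i) = 1\<^sub>m (t (Suc i))"
    "i < k - 1 \<Longrightarrow> mat_inv (A i) * A i = 1\<^sub>m (t (Suc i))"
  using A_props mat_inv_correct[of "A i" "t (Suc i)"] by auto

lemma Eh_carrier: "i < k - 1 \<Longrightarrow> Eh i \<in> carrier_mat (t (Suc i)) (t (Suc i))"
  using Eh_props by auto

lemma E_diag_carrier: "i < k - 1 \<Longrightarrow> E_diag i \<in> carrier_mat (t (Suc i)) (t i)"
  using Eh_carrier unfolding E_diag_def by (rule pad_left_carrier)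

lemma t_le_t0: "j < k \<Longrightarrow> t j \<le> t 0"
proof (induction j)
  case (Suc j)
  then show ?case using t_decr by (metis Suc_lessD less_diff_conv add_lessD1 le_trans Suc_eq_plus1)
qed simp

lemma n_cols_eq: "n_cols = t 0 + n_rows"
  using sum.lessThan_Suc_shift[of t "k - 1"] k_ge_2 by simp

lemma rows_upt: "map t [1..<k] = map (\<lambda>i. t (Suc i)) [0..<k - 1]"
proof -
  have "[1..<k] = map Suc [0..<k - 1]" using k_ge_2 by (simp add: map_Suc_upt)
  then show ?thesis by (simp add: o_def)
qed

lemma A_eps_carrier: "A_eps k t A \<in> carrier_mat n_rows n_cols"
  unfolding A_eps_def rows_upt by (rule block_mat_upt_carrier)

lemma E_eps_carrier: "E_eps k t Eh \<in> carrier_mat n_rows n_cols"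
  unfolding E_eps_def rows_upt by (rule block_mat_upt_carrier)

lemma PF_eq: "PF = fract_const.mat_hom (A_eps k t A) + lam \<cdot>\<^sub>m fract_const.mat_hom (E_eps k t Eh)"
  using A_eps_carrier E_eps_carrier by (intro to_rat_fun_mat_pencil) auto

lemma P_carrier: "P \<in> carrier_mat n_rows n_cols"
  and PF_carrier: "PF \<in> carrier_mat n_rows n_cols"
  using A_eps_carrier unfolding to_rat_fun_mat_def pencil_def by auto

lemma N_block_mat:
  "N = block_mat (map t [0..<k]) (map (\<lambda>_. t 0) [0..<1]) (\<lambda>j _. map_mat (\<lambda>c. monom c j) (Zp j))"
  unfolding N_mat_def by simp

lemma N_carrier: "N \<in> carrier_mat n_cols (t 0)"
  using block_mat_upt_carrier[of t k "\<lambda>_. t 0" 1] unfolding N_block_mat by simp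

lemma NF_carrier: "NF \<in> carrier_mat n_cols (t 0)"
  using N_carrier unfolding to_rat_fun_mat_def by simp

lemma inv_A_mult_Eh_triangular:
  assumes i: "i < k - 1"
  shows "upper_triangular (mat_inv (A i) * Eh i)"
    "q < t (Suc i) \<Longrightarrow> (mat_inv (A i) * Eh i) $$ (q, q) \<noteq> 0"
proof -
  have W: "mat_inv (A i) * Eh i \<in> carrier_mat (t (Suc i)) (t (Suc i))"
    using A_inv(1)[OF i] Eh_carrier[OF i] by simp
  have "upper_triangular (mat_inv (A i))"
    using upper_triangular_left_inverse[OF A_carrier A_inv(1,3)] A_props i by blast
  then show tri: "upper_triangular (mat_inv (A i) * Eh i)"
    using upper_triangular_mult[OF A_inv(1)[OF i] Eh_carrier[OF i]] Eh_props i by blast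
  have "det (mat_inv (A i) * Eh i) \<noteq> 0"
    using det_mult[OF A_inv(1)[OF i] Eh_carrier[OF i]] A_props Eh_props i
      invertible_mat_det_nonzero[of "A i" "t (Suc i)"] invertible_mat_det_nonzero[of "Eh i" "t (Suc i)"]
    by auto
  then show "q < t (Suc i) \<Longrightarrow> (mat_inv (A i) * Eh i) $$ (q, q) \<noteq> 0"
    using upper_triangular_diag_nonzero[OF W tri] by blast
qed

lemma Z_padded_triangular:
  assumes i: "i < k - 1"
  shows "Z i \<in> carrier_mat (t (Suc i)) (t i) \<and> padded_triangular (Z i)"
proof -
  let ?W = "mat_inv (A i) * Eh i"
  have W: "?W \<in> carrier_mat (t (Suc i)) (t (Suc i))" using A_inv(1)[OF i] Eh_carrier[OF i] by simp
  have "upper_triangular (- ?W)"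
  proof (rule upper_triangularI)
    fix a b assume "b < a" "a < dim_row (- ?W)"
    then show "(- ?W) $$ (a, b) = 0"
      using W A_inv(1)[OF i] upper_triangularD[OF inv_A_mult_Eh_triangular(1)[OF i], of b a] by auto
  qed
  moreover have "(- ?W) $$ (q, q) \<noteq> 0" if "q < t (Suc i)" for q
    using A_inv(1)[OF i] Eh_carrier[OF i] inv_A_mult_Eh_triangular(2)[OF i that] that by auto
  ultimately have "padded_triangular (pad_left (t i) (- ?W))"
    using W t_decr i by (intro padded_triangular_pad_left[where m = "t (Suc i)"]) auto
  then show ?thesis using pad_left_carrier[OF uminus_carrier_mat[OF W]] unfolding Zmat_def by simp
qed

lemma Z_carrier: "i < k - 1 \<Longrightarrow> Z i \<in> carrier_mat (t (Suc i)) (t i)"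
  using Z_padded_triangular by blast

lemma Zp_padded_triangular:
  "j < k \<Longrightarrow> Zp j \<in> carrier_mat (t j) (t 0) \<and> padded_triangular (Zp j)"
proof (induction j)
  case 0
  then show ?case by (simp add: padded_triangular_one)
next
  case (Suc j)
  then have "j < k - 1" by simp
  then have "Z j \<in> carrier_mat (t (Suc j)) (t j)" "padded_triangular (Z j)"
    using Z_padded_triangular by auto
  then show ?case
    using Suc padded_triangular_mult[of "Z j" _ _ "Zp j"] by auto
qed

lemma Zp_carrier: "j < k \<Longrightarrow> Zp j \<in> carrier_mat (t j) (t 0)"
  using Zp_padded_triangular by blast

lemma Zp_eq_0: "j < k \<Longrightarrow> q < t j \<Longrightarrow> l < t 0 \<Longrightarrow> l + t j < t 0 + q \<Longrightarrow> Zp j $$ (q, l) = 0"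
  using Zp_padded_triangular[of j] unfolding padded_triangular_def by auto

lemma Zp_diag: "j < k \<Longrightarrow> q < t j \<Longrightarrow> Zp j $$ (q, t 0 - t j + q) \<noteq> 0"
  using Zp_padded_triangular[of j] unfolding padded_triangular_def by auto

lemma A_mult_Z:
  assumes i: "i < k - 1"
  shows "A i * Z i = - E_diag i"
proof -
  have "A i * Z i = pad_left (t i) (A i * - (mat_inv (A i) * Eh i))"
    unfolding Zmat_def using A_carrier[OF i] A_inv(1)[OF i] Eh_carrier[OF i] t_decr i
    by (intro mult_pad_left) auto
  also have "A i * - (mat_inv (A i) * Eh i) = - Eh i"
    using A_carrier[OF i] A_inv[OF i] Eh_carrier[OF i] by (simp flip: assoc_mult_mat)
  finally show ?thesis unfolding E_diag_def pad_left_uminus .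
qed

lemma A_mult_Zp_Suc:
  assumes i: "i < k - 1"
  shows "A i * Zp (Suc i) = - (E_diag i * Zp i)"
proof -
  have Zi: "Zp i \<in> carrier_mat (t i) (t 0)" using Zp_carrier i by simp
  have "A i * Zp (Suc i) = (A i * Z i) * Zp i"
    using assoc_mult_mat[OF A_carrier[OF i] Z_carrier[OF i] Zi] by simp
  also have "\<dots> = - (E_diag i * Zp i)"
    unfolding A_mult_Z[OF i] by (rule uminus_mult_left_mat) (use E_diag_carrier[OF i] Zi in simp)
  finally show ?thesis .
qed

lemma PF_block_row:
  assumes x: "x \<in> carrier_vec n_cols" and i: "i < k - 1"
  shows "vec_block (\<lambda>i. t (Suc i)) (PF *\<^sub>v x) i
    = fract_const.mat_hom (A i) *\<^sub>v vec_block t x (Suc i)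
      + lam \<cdot>\<^sub>v (fract_const.mat_hom (E_diag i) *\<^sub>v vec_block t x i)"
proof -
  let ?A = "fract_const.mat_hom (A_eps k t A)" and ?E = "fract_const.mat_hom (E_eps k t Eh)"
  have A_row: "vec_block (\<lambda>i. t (Suc i)) (?A *\<^sub>v x) i
      = fract_const.mat_hom (A i) *\<^sub>v vec_block t x (Suc i)"
    unfolding A_eps_def rows_upt
    by (subst vec_block_mult_block_mat[where j' = "Suc i"]) (use i x A_carrier in auto)
  have E_row: "vec_block (\<lambda>i. t (Suc i)) (?E *\<^sub>v x) i
      = fract_const.mat_hom (E_diag i) *\<^sub>v vec_block t x i"
    unfolding E_eps_def rows_upt
    by (subst vec_block_mult_block_mat[where j' = i])
      (use i x E_diag_carrier in \<open>auto simp: E_diag_def\<close>)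
  have Ax: "?A *\<^sub>v x \<in> carrier_vec n_rows" and Ex: "?E *\<^sub>v x \<in> carrier_vec n_rows"
    using A_eps_carrier E_eps_carrier x by auto
  have "PF *\<^sub>v x = ?A *\<^sub>v x + lam \<cdot>\<^sub>v (?E *\<^sub>v x)"
    unfolding PF_eq using A_eps_carrier E_eps_carrier x
    by (simp add: add_mult_distrib_mat_vec[of _ n_rows n_cols] smult_mat_mult_vec)
  then show ?thesis
    using vec_block_add[OF Ax _ i, of "lam \<cdot>\<^sub>v (?E *\<^sub>v x)"] vec_block_smult[OF Ex i] Ex
    unfolding A_row E_row by simp
qed

lemma NF_block:
  assumes c: "c \<in> carrier_vec (t 0)" and j: "j < k"
  shows "vec_block t (NF *\<^sub>v c) j = lam ^ j \<cdot>\<^sub>v (fract_const.mat_hom (Zp j) *\<^sub>v c)"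
proof -
  have "vec_block t (NF *\<^sub>v c) j
      = map_mat to_fract (map_mat (\<lambda>c. monom c j) (Zp j)) *\<^sub>v vec_block (\<lambda>_. t 0) c 0"
    unfolding to_rat_fun_mat_def N_block_mat
    by (subst vec_block_mult_block_mat[where j' = 0]) (use c j Zp_carrier in auto)
  also have "vec_block (\<lambda>_. t 0) c 0 = c" using c by (intro eq_vecI) auto
  finally show ?thesis
    using Zp_carrier[OF j] c by (simp add: to_fract_mat_monom smult_mat_mult_vec)
qed

lemma NF_top: "c \<in> carrier_vec (t 0) \<Longrightarrow> vec_block t (NF *\<^sub>v c) 0 = c"
  using NF_block[of c 0] k_ge_2 by (simp add: fract_const.mat_hom_one)

lemma PF_mult_NF_block:
  assumes c: "c \<in> carrier_vec (t 0)" and i: "i < k - 1"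
  shows "vec_block (\<lambda>i. t (Suc i)) (PF *\<^sub>v (NF *\<^sub>v c)) i = 0\<^sub>v (t (Suc i))"
proof -
  let ?h = "fract_const.mat_hom" and ?M = "E_diag i * Zp i"
  have x: "NF *\<^sub>v c \<in> carrier_vec n_cols" using NF_carrier c by simp
  have Zi: "Zp i \<in> carrier_mat (t i) (t 0)" and ZSi: "Zp (Suc i) \<in> carrier_mat (t (Suc i)) (t 0)"
    using Zp_carrier[of i] Zp_carrier[of "Suc i"] i by auto
  have "?h (A i) *\<^sub>v vec_block t (NF *\<^sub>v c) (Suc i)
      = lam ^ Suc i \<cdot>\<^sub>v (?h (A i) *\<^sub>v (?h (Zp (Suc i)) *\<^sub>v c))"
    using NF_block[OF c, of "Suc i"] i A_carrier[OF i] ZSi c by (simp add: mult_mat_vec)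
  also have "\<dots> = lam ^ Suc i \<cdot>\<^sub>v (?h (- ?M) *\<^sub>v c)"
    by (simp only: fract_const.mat_hom_mult_vec_assoc[OF A_carrier[OF i] ZSi c] A_mult_Zp_Suc[OF i])
  also have "?h (- ?M) = - ?h ?M"
    by (auto intro!: eq_matI simp: fract_const.hom_uminus)
  finally have A_part: "?h (A i) *\<^sub>v vec_block t (NF *\<^sub>v c) (Suc i)
      = lam ^ Suc i \<cdot>\<^sub>v (- (?h ?M *\<^sub>v c))"
    using c Zi by simp
  have "lam \<cdot>\<^sub>v (?h (E_diag i) *\<^sub>v vec_block t (NF *\<^sub>v c) i)
      = lam \<cdot>\<^sub>v (lam ^ i \<cdot>\<^sub>v (?h (E_diag i) *\<^sub>v (?h (Zp i) *\<^sub>v c)))"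
    using NF_block[OF c, of i] i E_diag_carrier[OF i] Zi c by (simp add: mult_mat_vec)
  also have "\<dots> = lam ^ Suc i \<cdot>\<^sub>v (?h ?M *\<^sub>v c)"
    by (simp only: fract_const.mat_hom_mult_vec_assoc[OF E_diag_carrier[OF i] Zi c]
        smult_smult_assoc power_Suc)
  finally have E_part: "lam \<cdot>\<^sub>v (?h (E_diag i) *\<^sub>v vec_block t (NF *\<^sub>v c) i)
      = lam ^ Suc i \<cdot>\<^sub>v (?h ?M *\<^sub>v c)" .
  show ?thesis
    unfolding PF_block_row[OF x i] A_part E_part using E_diag_carrier[OF i]
    by (intro eq_vecI) auto
qed

lemma PF_mult_NF:
  assumes c: "c \<in> carrier_vec (t 0)"
  shows "PF *\<^sub>v (NF *\<^sub>v c) = 0\<^sub>v n_rows"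
proof -
  have "PF *\<^sub>v (NF *\<^sub>v c) \<in> carrier_vec n_rows"
    using PF_carrier NF_carrier c by (intro mult_mat_vec_carrier) auto
  then show ?thesis using PF_mult_NF_block[OF c]
    by (subst vec_eq_iff_blocks[where m = "k - 1"]) (auto simp: vec_block_zero)
qed

lemma null_vec_eq_0_if_top_0:
  assumes x: "x \<in> carrier_vec n_cols" and Px: "PF *\<^sub>v x = 0\<^sub>v n_rows"
    and top: "vec_block t x 0 = 0\<^sub>v (t 0)"
  shows "x = 0\<^sub>v n_cols"
proof -
  have "vec_block t x j = 0\<^sub>v (t j)" if "j < k" for j
    using that
  proof (induction j)
    case (Suc j)
    then have j: "j < k - 1" and IH: "vec_block t x j = 0\<^sub>v (t j)" by auto
    let ?xS = "vec_block t x (Suc j)"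
    have "fract_const.mat_hom (A j) *\<^sub>v ?xS
        + lam \<cdot>\<^sub>v (fract_const.mat_hom (E_diag j) *\<^sub>v vec_block t x j) = 0\<^sub>v (t (Suc j))"
      using PF_block_row[OF x j] Px j by (simp add: vec_block_zero)
    moreover have "lam \<cdot>\<^sub>v (fract_const.mat_hom (E_diag j) *\<^sub>v vec_block t x j) = 0\<^sub>v (t (Suc j))"
      unfolding IH using E_diag_carrier[OF j] by (auto intro!: eq_vecI)
    ultimately have AxS: "fract_const.mat_hom (A j) *\<^sub>v ?xS = 0\<^sub>v (t (Suc j))"
      using A_carrier[OF j] by simp
    have "?xS = fract_const.mat_hom (mat_inv (A j) * A j) *\<^sub>v ?xS"
      using A_inv(3)[OF j] by (simp add: fract_const.mat_hom_one)
    also have "\<dots> = fract_const.mat_hom (mat_inv (A j)) *\<^sub>v 0\<^sub>v (t (Suc j))"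
      using A_inv(1)[OF j] A_carrier[OF j]
      by (simp flip: AxS fract_const.mat_hom_mult_vec_assoc)
    also have "\<dots> = 0\<^sub>v (t (Suc j))" using A_inv(1)[OF j] by auto
    finally show ?case .
  qed (use top in simp)
  then show ?thesis using x by (subst vec_eq_iff_blocks[where m = k]) (auto simp: vec_block_zero)
qed

lemma null_vec_eq_NF_mult_top:
  assumes x: "x \<in> carrier_vec n_cols" and Px: "PF *\<^sub>v x = 0\<^sub>v n_rows"
  shows "x = NF *\<^sub>v vec_block t x 0"
proof -
  let ?y = "NF *\<^sub>v vec_block t x 0"
  have y: "?y \<in> carrier_vec n_cols" using NF_carrier by simp
  have "PF *\<^sub>v (x - ?y) = 0\<^sub>v n_rows"
    using Px PF_mult_NF[of "vec_block t x 0"] PF_carrier x y by (simp add: mult_minus_distrib_mat_vec)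
  moreover have "vec_block t (x - ?y) 0 = 0\<^sub>v (t 0)"
    using x y k_ge_2 by (simp add: vec_block_minus NF_top)
  ultimately have "x - ?y = 0\<^sub>v n_cols" using x y by (intro null_vec_eq_0_if_top_0) auto
  show ?thesis
  proof (rule eq_vecI)
    fix a assume a: "a < dim_vec ?y"
    then have "(x - ?y) $ a = 0" using \<open>x - ?y = 0\<^sub>v n_cols\<close> NF_carrier by simp
    then show "x $ a = ?y $ a" using x y a by simp
  qed (use x y NF_carrier in simp)
qed

lemma right_null_space_P: "right_null_space P = {x \<in> carrier_vec n_cols. PF *\<^sub>v x = 0\<^sub>v n_rows}"
  using P_carrier unfolding right_null_space_def by auto

lemma N_basis: "poly_basis_of_null_space P N"
  unfolding poly_basis_of_null_space_def
proof (intro conjI allI impI ballI)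
  show "dim_row N = dim_col P" using N_carrier P_carrier by simp
next
  fix j assume "j < dim_col N"
  then have j: "j < t 0" using N_carrier by simp
  have "col NF j = NF *\<^sub>v unit_vec (t 0) j" using NF_carrier j by (auto intro!: eq_vecI)
  then show "col NF j \<in> right_null_space P"
    unfolding right_null_space_P using PF_mult_NF[of "unit_vec (t 0) j"] NF_carrier by simp
next
  fix x assume "x \<in> right_null_space P"
  then have x: "x \<in> carrier_vec n_cols" and Px: "PF *\<^sub>v x = 0\<^sub>v n_rows"
    unfolding right_null_space_P by auto
  show "\<exists>!c. c \<in> carrier_vec (dim_col N) \<and> NF *\<^sub>v c = x"
  proof (rule ex1I[of _ "vec_block t x 0"])
    show "vec_block t x 0 \<in> carrier_vec (dim_col N) \<and> NF *\<^sub>v vec_block t x 0 = x"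
      using null_vec_eq_NF_mult_top[OF x Px] N_carrier by simp
  next
    fix c assume "c \<in> carrier_vec (dim_col N) \<and> NF *\<^sub>v c = x"
    then show "c = vec_block t x 0" using NF_top[of c] N_carrier by auto
  qed
qed

lemma normal_rank_P: "normal_rank P = n_rows"
proof -
  have PF: "PF \<in> carrier_mat n_rows (t 0 + n_rows)" using PF_carrier n_cols_eq by simp
  have "vec_space.rank n_rows PF = n_rows"
  proof (rule rank_eq_dim_row_if_trailing_cols_inj[OF PF])
    fix v :: "complex poly fract vec"
    assume v: "v \<in> carrier_vec n_rows" and Pv: "PF *\<^sub>v (0\<^sub>v (t 0) @\<^sub>v v) = 0\<^sub>v n_rows"
    have x: "0\<^sub>v (t 0) @\<^sub>v v \<in> carrier_vec n_cols" using v n_cols_eq by simp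
    have "vec_block t (0\<^sub>v (t 0) @\<^sub>v v) 0 = 0\<^sub>v (t 0)" using v by (intro eq_vecI) auto
    then have x0: "0\<^sub>v (t 0) @\<^sub>v v = 0\<^sub>v n_cols" by (rule null_vec_eq_0_if_top_0[OF x Pv])
    show "v = 0\<^sub>v n_rows"
    proof (rule eq_vecI)
      fix j assume "j < dim_vec (0\<^sub>v n_rows :: complex poly fract vec)"
      then have "(0\<^sub>v (t 0) @\<^sub>v v) $ (t 0 + j) = v $ j" "t 0 + j < n_cols"
        using v n_cols_eq by auto
      then show "v $ j = 0\<^sub>v n_rows $ j" using x0 \<open>j < _\<close> by simp
    qed (use v in simp)
  qed
  then show ?thesis unfolding normal_rank_def using P_carrier by simp
qed

section \<open>Minimality of the column degrees\<close>

(* Block j of column l of N is \<lambda>^j times column l of Zp j, which vanishes unless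
   t 0 \<le> l + t j; so last_block l bounds the degree of column l of N. *)
definition last_block :: "nat \<Rightarrow> nat" where
  "last_block l = Max {j. j < k \<and> t 0 \<le> l + t j}"

lemma last_block: "last_block l < k" "t 0 \<le> l + t (last_block l)"
proof -
  have "last_block l \<in> {j. j < k \<and> t 0 \<le> l + t j}"
    unfolding last_block_def using k_ge_2 by (intro Max_in) (auto intro!: exI[of _ 0])
  then show "last_block l < k" "t 0 \<le> l + t (last_block l)" by auto
qed

lemma last_block_ge: "j < k \<Longrightarrow> t 0 \<le> l + t j \<Longrightarrow> j \<le> last_block l"
  unfolding last_block_def by (intro Max_ge) auto

lemma last_block_mono: "l \<le> l' \<Longrightarrow> last_block l \<le> last_block l'"
  using last_block[of l] by (intro last_block_ge) auto

lemma N_index: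
  assumes "j < k" "q < t j" "l < t 0"
  shows "N $$ ((\<Sum>i<j. t i) + q, l) = monom (Zp j $$ (q, l)) j"
  using index_block_mat_upt[where i = j and m = k and j = 0 and n = 1 and r = q and f = t
      and q = l and g = "\<lambda>_. t 0" and B = "\<lambda>j _. map_mat (\<lambda>c. monom c j) (Zp j)"]
    assms Zp_carrier[of j]
  unfolding N_block_mat by simp

lemma col_degree_N_le:
  assumes l: "l < t 0"
  shows "col_degree N l \<le> last_block l"
  unfolding col_degree_def
proof (rule Max.boundedI)
  fix d assume "d \<in> insert 0 {degree (N $$ (a, l)) |a. a < dim_row N}"
  then consider "d = 0" | a where "a < n_cols" "d = degree (N $$ (a, l))" using N_carrier by auto
  then show "d \<le> last_block l"
  proof cases
    case 2
    then obtain j q where j: "j < k" and q: "q < t j" and a: "a = (\<Sum>i<j. t i) + q"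
      using less_sum_obtain_block[where f = t] by blast
    show ?thesis
    proof (cases "Zp j $$ (q, l) = 0")
      case False
      then have "t 0 \<le> l + t j" using Zp_eq_0[OF j q l] by linarith
      then show ?thesis
        using 2 a N_index[OF j q l] last_block_ge[OF j] False by (simp add: degree_monom_eq)
    qed (use 2 a N_index[OF j q l] in simp)
  qed simp
qed auto

lemma coeff_N_mult:
  assumes i: "i < k" and q: "q < t i"
  shows "coeff (\<Sum>l<t 0. N $$ ((\<Sum>j<i. t j) + q, l) * c l) (i + e)
    = (\<Sum>l<t 0. Zp i $$ (q, l) * coeff (c l) e)"
  unfolding coeff_sum by (intro sum.cong) (simp_all add: N_index[OF i q] coeff_monom_mult)

(* Take ls maximizing last_block l + degree (c l), and the largest such l. In row q of
   block i = last_block ls, the coefficient of \<lambda>^(i + degree (c ls)) then only receives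
   the diagonal entry of Zp i in column ls. *)
lemma degree_N_mult_ge:
  fixes c :: "nat \<Rightarrow> complex poly"
  assumes l0: "l0 < t 0" "c l0 \<noteq> 0"
  shows "\<exists>a < n_cols. last_block l0 \<le> degree (\<Sum>l<t 0. N $$ (a, l) * c l)"
proof -
  let ?L = "{l. l < t 0 \<and> c l \<noteq> 0}" and ?g = "\<lambda>l. last_block l + degree (c l)"
  obtain ls where ls: "ls \<in> ?L" and g_le: "\<And>l. l \<in> ?L \<Longrightarrow> ?g l \<le> ?g ls"
    and g_eq: "\<And>l. l \<in> ?L \<Longrightarrow> ?g l = ?g ls \<Longrightarrow> l \<le> ls"
    using finite_obtain_max_greatest[of ?L ?g] l0 by auto
  define i where "i = last_block ls"
  define q where "q = ls + t i - t 0"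
  define e where "e = degree (c ls)"
  have i: "i < k" "t 0 \<le> ls + t i" using last_block unfolding i_def by auto
  have q: "q < t i" and ls_q: "t 0 - t i + q = ls"
    using i ls t_le_t0[OF i(1)] unfolding q_def by auto
  have "coeff (\<Sum>l<t 0. N $$ ((\<Sum>j<i. t j) + q, l) * c l) (i + e)
      = (\<Sum>l<t 0. Zp i $$ (q, l) * coeff (c l) e)"
    by (rule coeff_N_mult[OF i(1) q])
  also have "\<dots> = Zp i $$ (q, ls) * coeff (c ls) e"
  proof (rule sum_eq_single)
    fix l assume l: "l \<in> {..<t 0}" "l \<noteq> ls"
    show "Zp i $$ (q, l) * coeff (c l) e = 0"
    proof (cases "l < ls")
      case True
      then show ?thesis using Zp_eq_0[OF i(1) q] l i unfolding q_def by simp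
    next
      case False
      have "coeff (c l) e = 0" if "c l \<noteq> 0"
      proof -
        have "l \<in> ?L" using l that by simp
        then have "?g l < ?g ls" using g_le g_eq False l(2) by fastforce
        moreover have "i \<le> last_block l" unfolding i_def using False by (intro last_block_mono) simp
        ultimately have "degree (c l) < e" unfolding e_def i_def by linarith
        then show ?thesis by (rule coeff_eq_0)
      qed
      then show ?thesis by (cases "c l = 0") auto
    qed
  qed (use ls in auto)
  finally have "coeff (\<Sum>l<t 0. N $$ ((\<Sum>j<i. t j) + q, l) * c l) (i + e) \<noteq> 0"
    using Zp_diag[OF i(1) q] ls ls_q unfolding e_def by simp
  then have "i + e \<le> degree (\<Sum>l<t 0. N $$ ((\<Sum>j<i. t j) + q, l) * c l)" by (rule le_degree)
  moreover have "last_block l0 \<le> i + e" using g_le[of l0] l0 unfolding i_def e_def by simp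
  moreover have "(\<Sum>j<i. t j) + q < n_cols" using block_pos_less_sum[where f = t, OF i(1) q] .
  ultimately show ?thesis by (meson le_trans)
qed

definition top_rows :: "complex poly mat \<Rightarrow> complex poly mat" where
  "top_rows M = mat (t 0) (dim_col M) (\<lambda>(l, j). M $$ (l, j))"

lemma poly_basis_dim_row: "poly_basis_of_null_space P M \<Longrightarrow> dim_row M = n_cols"
  using P_carrier unfolding poly_basis_of_null_space_def by simp

lemma top_rows_carrier: "top_rows M \<in> carrier_mat (t 0) (dim_col M)"
  and top_rows_fract_carrier: "to_rat_fun_mat (top_rows M) \<in> carrier_mat (t 0) (dim_col M)"
  unfolding top_rows_def to_rat_fun_mat_def by simp_all

lemma poly_basis_eq_N_mult_top_rows:
  assumes M: "poly_basis_of_null_space P M"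
  shows "M = N * top_rows M"
proof (rule eq_matI)
  have dM: "dim_row M = n_cols" by (rule poly_basis_dim_row[OF M])
  fix a j assume "a < dim_row (N * top_rows M)" "j < dim_col (N * top_rows M)"
  then have a: "a < n_cols" and j: "j < dim_col M" using N_carrier by (auto simp: top_rows_def)
  let ?x = "col (to_rat_fun_mat M) j"
  have "?x \<in> right_null_space P" using M j unfolding poly_basis_of_null_space_def by simp
  then have x: "?x \<in> carrier_vec n_cols" "PF *\<^sub>v ?x = 0\<^sub>v n_rows"
    unfolding right_null_space_P by auto
  have t0: "t 0 \<le> n_cols" using n_cols_eq by simp
  have "to_fract (M $$ (a, j)) = ?x $ a" using a j dM unfolding to_rat_fun_mat_def by simp
  also have "\<dots> = (NF *\<^sub>v vec_block t ?x 0) $ a"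
    by (rule arg_cong[where f = "\<lambda>v. v $ a", OF null_vec_eq_NF_mult_top[OF x]])
  also have "\<dots> = (\<Sum>l<t 0. NF $$ (a, l) * vec_block t ?x 0 $ l)"
    using a NF_carrier by (simp add: scalar_prod_def atLeast0LessThan)
  also have "\<dots> = (\<Sum>l<t 0. to_fract (N $$ (a, l)) * to_fract (M $$ (l, j)))"
    using a j dM t0 N_carrier unfolding to_rat_fun_mat_def by (intro sum.cong) auto
  also have "\<dots> = to_fract ((N * top_rows M) $$ (a, j))"
    using a j N_carrier by (simp add: top_rows_def scalar_prod_def atLeast0LessThan)
  finally show "M $$ (a, j) = (N * top_rows M) $$ (a, j)" by (simp only: to_fract_eq_iff)
qed (use N_carrier poly_basis_dim_row[OF M] in \<open>auto simp: top_rows_def\<close>)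

lemma poly_basis_mult_vec:
  assumes M: "poly_basis_of_null_space P M" and a: "a \<in> carrier_vec (dim_col M)"
  shows "to_rat_fun_mat M *\<^sub>v a = NF *\<^sub>v (to_rat_fun_mat (top_rows M) *\<^sub>v a)"
proof -
  have "to_rat_fun_mat M = to_rat_fun_mat (N * top_rows M)"
    by (rule arg_cong[where f = to_rat_fun_mat, OF poly_basis_eq_N_mult_top_rows[OF M]])
  also have "\<dots> = NF * to_rat_fun_mat (top_rows M)"
    unfolding to_rat_fun_mat_def by (rule to_fract.mat_hom_mult[OF N_carrier top_rows_carrier])
  finally show ?thesis
    using assoc_mult_mat_vec[OF NF_carrier top_rows_fract_carrier a] by simp
qed

lemma poly_basis_unique_repr:
  assumes "poly_basis_of_null_space P M" "x \<in> right_null_space P"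
  shows "\<exists>!c. c \<in> carrier_vec (dim_col M) \<and> to_rat_fun_mat M *\<^sub>v c = x"
  using assms unfolding poly_basis_of_null_space_def by auto

lemma top_rows_mult_inj:
  assumes M: "poly_basis_of_null_space P M" and a: "a \<in> carrier_vec (dim_col M)"
    and Ca: "to_rat_fun_mat (top_rows M) *\<^sub>v a = 0\<^sub>v (t 0)"
  shows "a = 0\<^sub>v (dim_col M)"
proof -
  let ?Mf = "to_rat_fun_mat M"
  have Mf: "?Mf \<in> carrier_mat n_cols (dim_col M)"
    using poly_basis_dim_row[OF M] unfolding to_rat_fun_mat_def by (intro carrier_matI) auto
  have "0\<^sub>v n_cols \<in> right_null_space P"
    unfolding right_null_space_P using mult_mat_vec_zero[OF PF_carrier] by simp
  then have "\<exists>!c. c \<in> carrier_vec (dim_col M) \<and> ?Mf *\<^sub>v c = 0\<^sub>v n_cols"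
    by (rule poly_basis_unique_repr[OF M])
  moreover have "?Mf *\<^sub>v a = 0\<^sub>v n_cols"
    unfolding poly_basis_mult_vec[OF M a] Ca by (rule mult_mat_vec_zero[OF NF_carrier])
  moreover have "?Mf *\<^sub>v 0\<^sub>v (dim_col M) = 0\<^sub>v n_cols" by (rule mult_mat_vec_zero[OF Mf])
  ultimately show ?thesis using a zero_carrier_vec by (metis (no_types, lifting))
qed

lemma top_rows_mult_surj:
  assumes M: "poly_basis_of_null_space P M" and l: "l < t 0"
  shows "\<exists>a \<in> carrier_vec (dim_col M). to_rat_fun_mat (top_rows M) *\<^sub>v a = unit_vec (t 0) l"
proof -
  let ?e = "unit_vec (t 0) l :: complex poly fract vec"
  have "NF *\<^sub>v ?e \<in> right_null_space P"
    unfolding right_null_space_P using PF_mult_NF[of ?e] NF_carrier by simp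
  then obtain a where a: "a \<in> carrier_vec (dim_col M)" "to_rat_fun_mat M *\<^sub>v a = NF *\<^sub>v ?e"
    using poly_basis_unique_repr[OF M] by blast
  then have "vec_block t (NF *\<^sub>v (to_rat_fun_mat (top_rows M) *\<^sub>v a)) 0 = vec_block t (NF *\<^sub>v ?e) 0"
    using poly_basis_mult_vec[OF M] by simp
  moreover have "to_rat_fun_mat (top_rows M) *\<^sub>v a \<in> carrier_vec (t 0)"
    using top_rows_fract_carrier a(1) by (rule mult_mat_vec_carrier)
  ultimately have "to_rat_fun_mat (top_rows M) *\<^sub>v a = ?e"
    using NF_top[of ?e] NF_top by simp
  then show ?thesis using a(1) by blast
qed

lemma poly_basis_top_rows:
  assumes M: "poly_basis_of_null_space P M"
  shows "dim_col M = t 0" "det (to_rat_fun_mat (top_rows M)) \<noteq> 0"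
proof -
  let ?C = "to_rat_fun_mat (top_rows M)"
  have C: "?C \<in> carrier_mat (t 0) (dim_col M)" by (rule top_rows_fract_carrier)
  have "dim_col M \<le> t 0" using dim_col_le_dim_row_if_inj[OF C top_rows_mult_inj[OF M]] .
  moreover have "t 0 \<le> dim_col M" using dim_row_le_dim_col_if_surj[OF C top_rows_mult_surj[OF M]] .
  ultimately show m: "dim_col M = t 0" by simp
  show "det ?C \<noteq> 0"
  proof
    assume "det ?C = 0"
    then obtain v where "v \<in> carrier_vec (t 0)" "v \<noteq> 0\<^sub>v (t 0)" "?C *\<^sub>v v = 0\<^sub>v (t 0)"
      using det_0_iff_vec_prod_zero_field[of ?C "t 0"] C m by auto
    then show False using top_rows_mult_inj[OF M] m by auto
  qed
qed

lemma N_minimal: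
  assumes M: "poly_basis_of_null_space P M"
  shows "sum_col_degrees N \<le> sum_col_degrees M"
proof -
  let ?C = "to_rat_fun_mat (top_rows M)"
  have m: "dim_col M = t 0" and det: "det ?C \<noteq> 0" using poly_basis_top_rows[OF M] by auto
  have C: "?C \<in> carrier_mat (t 0) (t 0)" using top_rows_fract_carrier[of M] m by simp
  obtain p where p: "p permutes {0..<t 0}" and nz: "\<And>i. i < t 0 \<Longrightarrow> ?C $$ (i, p i) \<noteq> 0"
    using det_nonzero_obtain_perm[OF C det] by blast
  have p_less: "p i < t 0" if "i < t 0" for i using permutes_in_image[OF p] that by simp
  have deg: "col_degree N i \<le> col_degree M (p i)" if i: "i < t 0" for i
  proof -
    have "M $$ (i, p i) \<noteq> 0"
      using nz[OF i] p_less[OF i] i m unfolding to_rat_fun_mat_def top_rows_def by simp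
    then obtain a where a: "a < n_cols"
      and deg_a: "last_block i \<le> degree (\<Sum>l<t 0. N $$ (a, l) * M $$ (l, p i))"
      using degree_N_mult_ge[of i "\<lambda>l. M $$ (l, p i)"] i by blast
    have "M $$ (a, p i) = (N * top_rows M) $$ (a, p i)"
      by (rule arg_cong[where f = "\<lambda>X. X $$ (a, p i)", OF poly_basis_eq_N_mult_top_rows[OF M]])
    also have "\<dots> = (\<Sum>l<t 0. N $$ (a, l) * M $$ (l, p i))"
      using a p_less[OF i] m N_carrier by (simp add: top_rows_def scalar_prod_def atLeast0LessThan)
    finally have "last_block i \<le> degree (M $$ (a, p i))" using deg_a by simp
    also have "\<dots> \<le> col_degree M (p i)"
      using a poly_basis_dim_row[OF M] by (intro col_degree_ge) simp
    finally show ?thesis using col_degree_N_le[OF i] by simp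
  qed
  have "sum_col_degrees N = (\<Sum>i<t 0. col_degree N i)"
    unfolding sum_col_degrees_def using N_carrier by simp
  also have "\<dots> \<le> (\<Sum>i<t 0. col_degree M (p i))" using deg by (intro sum_mono) simp
  also have "\<dots> = (\<Sum>j<t 0. col_degree M j)"
    using permutes_imp_bij[OF p] by (intro sum.reindex_bij_betw) (simp add: atLeast0LessThan)
  also have "\<dots> = sum_col_degrees M" unfolding sum_col_degrees_def m ..
  finally show ?thesis .
qed

end

theorem theorem5p8:
  fixes k :: nat and t :: "nat \<Rightarrow> nat" and A Eh :: "nat \<Rightarrow> complex mat"
  assumes "k \<ge> 2"
    and "\<forall>i < k - 1. t (Suc i) \<le> t i"
    and "\<forall>i < k - 1. A i \<in> carrier_mat (t (Suc i)) (t (Suc i))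
                       \<and> invertible_mat (A i) \<and> upper_triangular (A i)"
    and "\<forall>i < k - 1. Eh i \<in> carrier_mat (t (Suc i)) (t (Suc i))
                       \<and> invertible_mat (Eh i) \<and> upper_triangular (Eh i)"
  shows "let P = pencil (A_eps k t A) (E_eps k t Eh); N = N_mat k t A Eh
         in dim_col P = (\<Sum>i<k. t i)
            \<and> dim_row N = dim_col P \<and> dim_col N = dim_col P - normal_rank P
            \<and> minimal_poly_basis P N"
proof -
  interpret bidiagonal_pencil k t A Eh using assms by unfold_locales
  show ?thesis
    unfolding Let_def minimal_poly_basis_def
    using P_carrier N_carrier normal_rank_P n_cols_eq N_basis N_minimal by auto
qed

end
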